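(* Let $t_0=\inf\{x:G([0,x])>0\}$ and suppose $G$ has no atom at $t_0$, i.e. $G(\{t_0\})=0$. Then $\Lambda(v)>t_0+v$ for all $v\ge0$.
   Context: Model: Let $G$ be a probability measure on $[0,\infty)$. In $\mathbb Z^2$, every vertical edge has weight $1$ and every horizontal edge an independent random weight with law $G$; the passage time of a nearest-neighbour path is the sum of its edge weights; $T(u,w)$ is the infimum over paths from $u$ to $w$. For $v\ge0$, $\Lambda(v)=\lim_n\frac1nT((0,0),(n,\lceil vn\rceil))$ (a.s. limit, deterministic). *)

theory Defs
  imports "HOL-Probability.Probability"
begin

type_synonym vtx = "int \<times> int"

definition nn :: "vtx \<Rightarrow> vtx \<Rightarrow> bool" where
  "nn u w \<longleftrightarrow> \<bar>fst u - fst w\<bar> + \<bar>snd u - snd w\<bar> = 1"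

text \<open>An environment omega assigns to each vertex (x,y) the weight of the horizontal
  edge between (x,y) and (x+1,y). Vertical edges have weight 1.\<close>
definition edge_weight :: "(vtx \<Rightarrow> real) \<Rightarrow> vtx \<Rightarrow> vtx \<Rightarrow> real" where
  "edge_weight \<omega> u w = (if fst u = fst w then 1 else \<omega> (min (fst u) (fst w), snd u))"

definition is_path :: "vtx \<Rightarrow> vtx \<Rightarrow> vtx list \<Rightarrow> bool" where
  "is_path u w p \<longleftrightarrow> p \<noteq> [] \<and> hd p = u \<and> last p = w \<and>
     (\<forall>i < length p - 1. nn (p ! i) (p ! Suc i))"

definition passage :: "(vtx \<Rightarrow> real) \<Rightarrow> vtx list \<Rightarrow> real" where
  "passage \<omega> p = (\<Sum>i < length p - 1. edge_weight \<omega> (p ! i) (p ! Suc i))"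

definition T :: "(vtx \<Rightarrow> real) \<Rightarrow> vtx \<Rightarrow> vtx \<Rightarrow> real" where
  "T \<omega> u w = Inf (passage \<omega> ` {p. is_path u w p})"

definition weights_measure :: "real measure \<Rightarrow> (vtx \<Rightarrow> real) measure" where
  "weights_measure G = PiM UNIV (\<lambda>_. G)"

definition t0 :: "real measure \<Rightarrow> real" where
  "t0 G = Inf {x. measure G {0..x} > 0}"

end

theory Submission
  imports Defs
begin

text \<open>With nonnegative weights, every path from the origin to \<open>(n, m)\<close> costs at least as much
  as a column path: one crossing each column \<open>0, ..., n - 1\<close> by a single horizontal edge, at
  heights \<open>y_0, ..., y_(n-1)\<close>, and paying in between the vertical variation
  \<open>|y_0| + |y_1 - y_0| + ... + |m - y_(n-1)| \<ge> m\<close>.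
  Weights are a.s. at least \<open>t0\<close>, so if \<open>T < (t0 + v + \<delta>/2) n\<close> and \<open>m \<ge> v n\<close>, then at least
  half of the \<open>n\<close> crossing edges weigh less than \<open>t0 + \<delta>\<close> and the variation is at most
  \<open>(v + 1) n\<close>. There are at most \<open>3^n 2^((v+1) n)\<close> such height sequences and \<open>2^n\<close> choices
  of the light half, each of probability at most \<open>G[0, t0 + \<delta>)^(n/2)\<close>. As \<open>G\<close> has no atom
  at \<open>t0\<close>, this mass is as small as we like for small \<open>\<delta>\<close>; the union bound is then summable,
  and Borel-Cantelli rules out \<open>\<Lambda>(v) \<le> t0 + v\<close>.\<close>

fun height_variation :: "int \<Rightarrow> int list \<Rightarrow> int" where
  "height_variation b [] = 0"
| "height_variation b (y # ys) = \<bar>y - b\<bar> + height_variation y ys"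

fun column_weight :: "(vtx \<Rightarrow> real) \<Rightarrow> int \<Rightarrow> int list \<Rightarrow> real" where
  "column_weight \<omega> a [] = 0"
| "column_weight \<omega> a (y # ys) = \<omega> (a, y) + column_weight \<omega> (a + 1) ys"

lemma height_variation_nonneg: "height_variation b ys \<ge> 0"
  by (induction ys arbitrary: b) auto

lemma height_variation_Cons_le: "height_variation b ys \<le> height_variation b (y # ys)"
  by (cases ys) auto

lemma height_variation_append_le: "height_variation b xs \<le> height_variation b (xs @ [d])"
  by (induction xs arbitrary: b) auto

lemma height_variation_ge_endpoint: "\<bar>d - b\<bar> \<le> height_variation b (xs @ [d])"
proof (induction xs arbitrary: b)
  case (Cons y ys)
  have "\<bar>d - b\<bar> \<le> \<bar>y - b\<bar> + \<bar>d - y\<bar>" by simp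
  with Cons[of y] show ?case by simp
qed simp

lemma column_weight_eq_sum: "column_weight \<omega> a ys = (\<Sum>i<length ys. \<omega> (a + int i, ys ! i))"
proof (induction ys arbitrary: a)
  case (Cons y ys)
  show ?case
    by (simp add: Cons sum.lessThan_Suc_shift del: sum.lessThan_Suc) (simp add: algebra_simps)
qed simp

text \<open>A column path from \<open>(a, b)\<close> to \<open>(c, d)\<close> crosses column \<open>a + i\<close> (\<open>i < c - a\<close>) through the
  horizontal edge at height \<open>ys ! i\<close> and moves vertically in between, so its passage time is
  \<open>column_weight \<omega> a ys + height_variation b (ys @ [d])\<close>. If \<open>c \<le> a\<close>, only \<open>\<bar>d - b\<bar>\<close> is counted.\<close>
definition column_path_le :: "(vtx \<Rightarrow> real) \<Rightarrow> vtx \<Rightarrow> vtx \<Rightarrow> real \<Rightarrow> bool" where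
  "column_path_le \<omega> u w s \<longleftrightarrow> (\<exists>ys. length ys = nat (fst w - fst u) \<and>
     column_weight \<omega> (fst u) ys + height_variation (snd u) (ys @ [snd w]) \<le> s)"

lemma column_path_le_refl: "column_path_le \<omega> u u 0"
  unfolding column_path_le_def by (intro exI[of _ "[]"]) simp

lemma column_path_le_vertical_step:
  assumes "column_path_le \<omega> (a, b') w s" and "\<bar>b - b'\<bar> = 1"
  shows "column_path_le \<omega> (a, b) w (1 + s)"
proof -
  obtain ys where "length ys = nat (fst w - a)"
    and "column_weight \<omega> a ys + height_variation b' (ys @ [snd w]) \<le> s"
    using assms(1) by (auto simp: column_path_le_def)
  moreover have "height_variation b (ys @ [snd w]) \<le> 1 + height_variation b' (ys @ [snd w])"
    using assms(2) by (cases ys) auto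
  ultimately show ?thesis
    unfolding column_path_le_def by (intro exI[of _ ys]) auto
qed

lemma column_path_le_right_step:
  assumes nonneg: "\<forall>z. 0 \<le> \<omega> z" and "column_path_le \<omega> (a + 1, b) w s"
  shows "column_path_le \<omega> (a, b) w (\<omega> (a, b) + s)"
proof -
  obtain ys where len: "length ys = nat (fst w - (a + 1))"
    and le: "column_weight \<omega> (a + 1) ys + height_variation b (ys @ [snd w]) \<le> s"
    using assms(2) by (auto simp: column_path_le_def)
  show ?thesis
  proof (cases "a < fst w")
    case True
    with len le show ?thesis
      unfolding column_path_le_def by (intro exI[of _ "b # ys"]) auto
  next
    case False
    with len le nonneg show ?thesis
      unfolding column_path_le_def by (intro exI[of _ "[]"]) (auto intro: add_increasing)
  qed
qed

lemma column_path_le_left_step: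
  assumes nonneg: "\<forall>z. 0 \<le> \<omega> z" and "column_path_le \<omega> (a - 1, b) w s"
  shows "column_path_le \<omega> (a, b) w (\<omega> (a - 1, b) + s)"
proof -
  obtain ys where len: "length ys = nat (fst w - (a - 1))"
    and le: "column_weight \<omega> (a - 1) ys + height_variation b (ys @ [snd w]) \<le> s"
    using assms(2) by (auto simp: column_path_le_def)
  show ?thesis
  proof (cases "a \<le> fst w")
    case True
    then obtain y ys' where ys: "ys = y # ys'"
      using len by (cases ys) auto
    have "height_variation b (ys' @ [snd w]) \<le> height_variation b (ys @ [snd w])"
      using height_variation_Cons_le[of b "ys' @ [snd w]" y] by (simp add: ys)
    moreover have "column_weight \<omega> (a - 1) ys = \<omega> (a - 1, y) + column_weight \<omega> a ys'"
      by (simp add: ys)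
    ultimately have "column_weight \<omega> a ys' + height_variation b (ys' @ [snd w]) \<le> \<omega> (a - 1, b) + s"
      using le nonneg[rule_format, of "(a - 1, y)"] nonneg[rule_format, of "(a - 1, b)"] by linarith
    with len show ?thesis
      unfolding column_path_le_def by (intro exI[of _ ys']) (auto simp: ys)
  next
    case False
    with len le nonneg show ?thesis
      unfolding column_path_le_def by (intro exI[of _ "[]"]) (auto intro: add_increasing)
  qed
qed

lemma column_path_le_edge_step:
  assumes nonneg: "\<forall>z. 0 \<le> \<omega> z" and "nn u u'" and "column_path_le \<omega> u' w s"
  shows "column_path_le \<omega> u w (edge_weight \<omega> u u' + s)"
proof -
  obtain a b a' b' where u: "u = (a, b)" and u': "u' = (a', b')" by fastforce
  have "\<bar>a - a'\<bar> + \<bar>b - b'\<bar> = 1" using assms(2) by (simp add: nn_def u u')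
  then consider "a' = a" "\<bar>b - b'\<bar> = 1" | "a' = a + 1" "b' = b" | "a' = a - 1" "b' = b"
    by arith
  then show ?thesis
  proof cases
    case 1
    then show ?thesis using column_path_le_vertical_step assms(3)
      by (simp add: edge_weight_def u u')
  next
    case 2
    then show ?thesis using column_path_le_right_step[OF nonneg] assms(3)
      by (simp add: edge_weight_def u u')
  next
    case 3
    then show ?thesis using column_path_le_left_step[OF nonneg] assms(3)
      by (simp add: edge_weight_def u u')
  qed
qed

lemma is_path_singleton_iff: "is_path u w [x] \<longleftrightarrow> x = u \<and> x = w"
  by (auto simp: is_path_def)

lemma is_path_Cons_Cons_iff:
  "is_path u w (x # y # p) \<longleftrightarrow> x = u \<and> nn u y \<and> is_path y w (y # p)"
  unfolding is_path_def by (auto simp: less_Suc_eq_0_disj)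

lemma passage_Cons_Cons: "passage \<omega> (x # y # p) = edge_weight \<omega> x y + passage \<omega> (y # p)"
  unfolding passage_def by (simp add: sum.lessThan_Suc_shift del: sum.lessThan_Suc)

lemma column_path_le_passage:
  assumes nonneg: "\<forall>z. 0 \<le> \<omega> z"
  shows "is_path u w p \<Longrightarrow> column_path_le \<omega> u w (passage \<omega> p)"
proof (induction p arbitrary: u rule: induct_list012)
  case (2 x)
  then show ?case by (auto simp: is_path_singleton_iff passage_def column_path_le_refl)
next
  case (3 x y p)
  then have "x = u" and "nn u y" and "is_path y w (y # p)" by (simp_all add: is_path_Cons_Cons_iff)
  then show ?case
    using "3.IH"(2) column_path_le_edge_step[OF nonneg] by (simp add: passage_Cons_Cons)
qed (simp add: is_path_def)

lemma is_path_exists: "\<exists>p. is_path u w p"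
proof -
  have "\<exists>p. is_path (a, b) w p" if "nat \<bar>fst w - a\<bar> + nat \<bar>snd w - b\<bar> = k" for a b k
    using that
  proof (induction k arbitrary: a b)
    case 0
    then show ?case by (intro exI[of _ "[w]"]) (auto simp: is_path_def)
  next
    case (Suc k)
    define u' where "u' = (if a \<noteq> fst w then (a + sgn (fst w - a), b) else (a, b + sgn (snd w - b)))"
    have "nn (a, b) u'" and dist: "nat \<bar>fst w - fst u'\<bar> + nat \<bar>snd w - snd u'\<bar> = k"
      using Suc.prems by (auto simp: u'_def nn_def sgn_if)
    moreover obtain p where p: "is_path u' w p" using Suc.IH[of "fst u'" "snd u'"] dist by auto
    moreover have "p = u' # tl p" using p by (cases p) (auto simp: is_path_def)
    ultimately show ?case by (metis is_path_Cons_Cons_iff)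
  qed
  then show ?thesis by (metis prod.collapse)
qed

lemma column_path_le_mono: "column_path_le \<omega> u w s \<Longrightarrow> s \<le> s' \<Longrightarrow> column_path_le \<omega> u w s'"
  unfolding column_path_le_def by force

lemma column_path_le_of_T_less:
  assumes "\<forall>z. 0 \<le> \<omega> z" and "T \<omega> u w < s"
  shows "column_path_le \<omega> u w s"
proof -
  have "passage \<omega> ` {p. is_path u w p} \<noteq> {}" using is_path_exists by blast
  from cInf_lessD[OF this assms(2)[unfolded T_def]]
  obtain p where "is_path u w p" and "passage \<omega> p < s" by blast
  then show ?thesis
    using column_path_le_passage[OF assms(1)] column_path_le_mono by fastforce
qed

definition bounded_variation_seqs :: "int \<Rightarrow> nat \<Rightarrow> nat \<Rightarrow> int list set" where
  "bounded_variation_seqs b n K = {ys. length ys = n \<and> height_variation b ys \<le> int K}"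

lemma sum_two_power_tent_le:
  "(\<Sum>y\<in>{a - int K..a + int K}. (2::nat) ^ (K - nat \<bar>y - a\<bar>)) + 2 \<le> 3 * 2 ^ K"
proof (induction K)
  case (Suc K)
  have "{a - int (Suc K)..a + int (Suc K)} =
      insert (a - int (Suc K)) (insert (a + int (Suc K)) {a - int K..a + int K})"
    by auto
  moreover have "(\<Sum>y\<in>{a - int K..a + int K}. (2::nat) ^ (Suc K - nat \<bar>y - a\<bar>)) =
      2 * (\<Sum>y\<in>{a - int K..a + int K}. 2 ^ (K - nat \<bar>y - a\<bar>))"
    unfolding sum_distrib_left by (intro sum.cong refl) (auto simp: Suc_diff_le)
  ultimately show ?case using Suc.IH by simp
qed simp

lemma bounded_variation_seqs_finite_card:
  "finite (bounded_variation_seqs b n K) \<and> card (bounded_variation_seqs b n K) \<le> 3 ^ n * 2 ^ K"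
proof (induction n arbitrary: b K)
  case 0
  have "bounded_variation_seqs b 0 K = {[]}" by (auto simp: bounded_variation_seqs_def)
  then show ?case by simp
next
  case (Suc n)
  let ?I = "{b - int K..b + int K}"
  let ?U = "\<Union>y\<in>?I. Cons y ` bounded_variation_seqs y n (K - nat \<bar>y - b\<bar>)"
  have sub: "bounded_variation_seqs b (Suc n) K \<subseteq> ?U"
  proof
    fix ys assume "ys \<in> bounded_variation_seqs b (Suc n) K"
    then obtain y r where ys: "ys = y # r" "length r = n" "\<bar>y - b\<bar> + height_variation y r \<le> int K"
      by (cases ys) (auto simp: bounded_variation_seqs_def)
    with height_variation_nonneg[of y r]
    have "y \<in> ?I" and "r \<in> bounded_variation_seqs y n (K - nat \<bar>y - b\<bar>)"
      by (auto simp: bounded_variation_seqs_def)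
    then show "ys \<in> ?U" using ys(1) by blast
  qed
  have fin: "finite ?U" using Suc.IH by auto
  have "card (bounded_variation_seqs b (Suc n) K) \<le> card ?U"
    by (rule card_mono[OF fin sub])
  also have "\<dots> \<le> (\<Sum>y\<in>?I. card (Cons y ` bounded_variation_seqs y n (K - nat \<bar>y - b\<bar>)))"
    by (rule card_UN_le) simp
  also have "\<dots> \<le> (\<Sum>y\<in>?I. 3 ^ n * 2 ^ (K - nat \<bar>y - b\<bar>))"
    by (intro sum_mono order.trans[OF card_image_le]) (use Suc.IH in auto)
  also have "\<dots> = 3 ^ n * (\<Sum>y\<in>?I. 2 ^ (K - nat \<bar>y - b\<bar>))" by (simp add: sum_distrib_left)
  also have "\<dots> \<le> 3 ^ Suc n * 2 ^ K"
    using sum_two_power_tent_le[of K b] by simp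
  finally show ?case using finite_subset[OF sub fin] by simp
qed

text \<open>Markov's inequality for the excesses \<open>w i - t\<close>.\<close>
lemma card_small_terms_ge_half:
  fixes w :: "nat \<Rightarrow> real"
  assumes "\<forall>i<n. t \<le> w i" and "0 < \<delta>" and "(\<Sum>i<n. w i) \<le> (t + \<delta> / 2) * n"
  shows "n \<le> 2 * card {i\<in>{..<n}. w i < t + \<delta>}"
proof -
  let ?S = "{i\<in>{..<n}. w i < t + \<delta>}" and ?D = "{i\<in>{..<n}. \<not> w i < t + \<delta>}"
  have "?S \<union> ?D = {..<n}" and "?S \<inter> ?D = {}" by auto
  then have card: "card ?S + card ?D = n"
    using card_Un_disjoint[of ?S ?D] by simp
  have "(\<Sum>i<n. if w i < t + \<delta> then 0 else \<delta>) = (\<Sum>i\<in>?D. \<delta>)"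
    by (subst sum.inter_filter) (auto intro!: sum.cong)
  then have "t * n + \<delta> * card ?D = (\<Sum>i<n. t + (if w i < t + \<delta> then 0 else \<delta>))"
    by (simp add: sum.distrib)
  also have "\<dots> \<le> (\<Sum>i<n. w i)"
    using assms(1) by (intro sum_mono) auto
  finally have "\<delta> * (2 * card ?D) \<le> \<delta> * n"
    using assms(3) by (simp add: algebra_simps)
  then have "2 * card ?D \<le> n"
    using assms(2) by (simp del: of_nat_mult add: of_nat_mult[symmetric])
  with card show ?thesis by linarith
qed

definition many_light_columns :: "real \<Rightarrow> nat \<Rightarrow> nat \<Rightarrow> (vtx \<Rightarrow> real) set" where
  "many_light_columns s K n = {\<omega>. \<exists>ys\<in>bounded_variation_seqs 0 n K. \<exists>S\<in>Pow {..<n}.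
     n \<le> 2 * card S \<and> (\<forall>i\<in>S. \<omega> (int i, ys ! i) < s)}"

lemma T_less_imp_many_light_columns:
  fixes \<omega> :: "vtx \<Rightarrow> real" and t \<delta> v :: real and m :: int
  assumes nonneg: "\<forall>z. 0 \<le> \<omega> z" and ge: "\<forall>z. t \<le> \<omega> z" and "0 < \<delta>" and "\<delta> \<le> 1"
    and "v * n \<le> m" and "T \<omega> (0, 0) (int n, m) < (t + v + \<delta> / 2) * n"
  shows "\<omega> \<in> many_light_columns (t + \<delta>) (nat \<lfloor>(v + 1) * n\<rfloor>) n"
proof -
  obtain ys where len: "length ys = n"
    and cost: "column_weight \<omega> 0 ys + height_variation 0 (ys @ [m]) \<le> (t + v + \<delta> / 2) * n"
    using column_path_le_of_T_less[OF nonneg assms(6)] by (auto simp: column_path_le_def)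
  have weight: "column_weight \<omega> 0 ys = (\<Sum>i<n. \<omega> (int i, ys ! i))"
    by (simp add: column_weight_eq_sum len)
  have "v * n \<le> height_variation 0 (ys @ [m])"
    using assms(5) height_variation_ge_endpoint[of m 0 ys] by linarith
  with cost weight have "(\<Sum>i<n. \<omega> (int i, ys ! i)) \<le> (t + \<delta> / 2) * n"
    by (simp add: algebra_simps)
  then have "n \<le> 2 * card {i\<in>{..<n}. \<omega> (int i, ys ! i) < t + \<delta>}"
    using ge \<open>0 < \<delta>\<close> by (intro card_small_terms_ge_half) auto
  moreover have "height_variation 0 ys \<le> int (nat \<lfloor>(v + 1) * n\<rfloor>)"
  proof -
    have "t * n \<le> (\<Sum>i<n. \<omega> (int i, ys ! i))"
      using ge sum_mono[of "{..<n}" "\<lambda>_. t" "\<lambda>i. \<omega> (int i, ys ! i)"] by (simp add: mult.commute)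
    moreover have "\<delta> * n \<le> 1 * real n" using \<open>\<delta> \<le> 1\<close> by (intro mult_right_mono) auto
    ultimately have "height_variation 0 (ys @ [m]) \<le> (v + 1) * n"
      using cost weight by (simp add: algebra_simps)
    then show ?thesis
      using height_variation_append_le[of 0 ys m] by linarith
  qed
  ultimately show ?thesis
    using len unfolding many_light_columns_def bounded_variation_seqs_def by auto
qed

definition light_columns :: "real \<Rightarrow> int list \<Rightarrow> nat set \<Rightarrow> (vtx \<Rightarrow> real) set" where
  "light_columns s ys S = {\<omega>. \<forall>i\<in>S. \<omega> (int i, ys ! i) < s}"

definition light_column_choices :: "nat \<Rightarrow> nat \<Rightarrow> (int list \<times> nat set) set" where
  "light_column_choices K n = bounded_variation_seqs 0 n K \<times> {S\<in>Pow {..<n}. n \<le> 2 * card S}"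

lemma light_columns_eq_cylinder:
  "light_columns s ys S = {\<omega>. \<forall>z\<in>(\<lambda>i. (int i, ys ! i)) ` S. \<omega> z \<in> {..<s}}"
  by (auto simp: light_columns_def)

lemma many_light_columns_eq_UN:
  "many_light_columns s K n = (\<Union>p\<in>light_column_choices K n. light_columns s (fst p) (snd p))"
  unfolding many_light_columns_def light_column_choices_def light_columns_def by auto blast+

lemma finite_light_column_choices: "finite (light_column_choices K n)"
  using bounded_variation_seqs_finite_card by (auto simp: light_column_choices_def)

lemma card_light_column_choices: "card (light_column_choices K n) \<le> 3 ^ n * 2 ^ K * 2 ^ n"
proof -
  have "card {S\<in>Pow {..<n}. n \<le> 2 * card S} \<le> card (Pow {..<n})"
    by (rule card_mono) auto
  then show ?thesis
    using bounded_variation_seqs_finite_card[of 0 n K]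
    by (auto simp: light_column_choices_def card_cartesian_product card_Pow intro: mult_mono)
qed

context real_distribution
begin

lemma cdf_t0_eq_0:
  assumes "measure M {..<0} = 0" and "measure M {t0 M} = 0"
  shows "cdf M (t0 M) = 0"
proof -
  have bdd: "bdd_below {x. measure M {0..x} > 0}"
    by (rule bdd_belowI[of _ 0]) (auto intro: ccontr)
  have "cdf M x = 0" if "x < t0 M" for x
  proof -
    have "\<not> measure M {0..x} > 0"
      using cInf_lower[OF _ bdd, of x] that by (auto simp: t0_def)
    then have "measure M {0..x} = 0" by (simp add: zero_less_measure_iff)
    moreover have "cdf M x \<le> measure M {..<0} + measure M {0..x}"
      unfolding cdf_def by (rule order.trans[OF _ measure_Un_le]) (auto intro: finite_measure_mono)
    ultimately show ?thesis using assms(1) cdf_nonneg[of x] by linarith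
  qed
  then have "eventually (\<lambda>x. cdf M x = 0) (at_left (t0 M))"
    unfolding eventually_at_left_field by (intro exI[of _ "t0 M - 1"]) auto
  then have "(cdf M \<longlongrightarrow> 0) (at_left (t0 M))" by (rule tendsto_eventually)
  moreover have "(cdf M \<longlongrightarrow> cdf M (t0 M)) (at_left (t0 M))"
    using isCont_cdf[of "t0 M"] assms(2) by (auto simp: isCont_def intro: tendsto_within_subset)
  ultimately show ?thesis by (intro tendsto_unique[OF trivial_limit_at_left_real]) simp_all
qed

lemma exists_measure_lessThan_right_le:
  assumes "0 < e"
  shows "\<exists>\<delta>>0. \<delta> \<le> 1 \<and> measure M {..<a + \<delta>} \<le> cdf M a + e"
proof -
  have "eventually (\<lambda>x. cdf M x < cdf M a + e) (at_right a)"
    using cdf_is_right_cont[of a] assms by (auto simp: continuous_within intro: order_tendstoD)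
  then obtain b where "a < b" and b: "\<And>x. a < x \<Longrightarrow> x < b \<Longrightarrow> cdf M x < cdf M a + e"
    unfolding eventually_at_right_field by blast
  define \<delta> where "\<delta> = min 1 ((b - a) / 2)"
  have "measure M {..<a + \<delta>} \<le> cdf M (a + \<delta>)"
    unfolding cdf_def by (rule finite_measure_mono) auto
  also have "\<dots> < cdf M a + e"
    using \<open>a < b\<close> by (intro b) (auto simp: \<delta>_def min_def field_simps)
  finally show ?thesis
    using \<open>a < b\<close> by (intro exI[of _ \<delta>]) (auto simp: \<delta>_def)
qed

lemma measure_lessThan_t0_eq_0:
  assumes "measure M {..<0} = 0" and "measure M {t0 M} = 0"
  shows "measure M {..<t0 M} = 0"
proof -
  have "measure M {..<t0 M} \<le> cdf M (t0 M)"
    unfolding cdf_def by (rule finite_measure_mono) auto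
  with cdf_t0_eq_0[OF assms] show ?thesis by (simp add: measure_le_0_iff)
qed

lemma exists_light_threshold:
  assumes "measure M {..<0} = 0" and "measure M {t0 M} = 0" and "0 < e"
  shows "\<exists>\<delta>>0. \<delta> \<le> 1 \<and> measure M {..<t0 M + \<delta>} \<le> e"
  using exists_measure_lessThan_right_le[OF assms(3), of "t0 M"] cdf_t0_eq_0[OF assms(1,2)] by simp

lemma space_weights_measure: "space (weights_measure M) = UNIV"
  by (simp add: weights_measure_def space_PiM PiE_UNIV_domain)

lemma prob_space_weights_measure: "prob_space (weights_measure M)"
  unfolding weights_measure_def by (rule prob_space_PiM) (rule prob_space_axioms)

lemma weights_cylinder_sets:
  assumes "finite J" and "A \<in> sets borel"
  shows "{\<omega>. \<forall>z\<in>J. \<omega> z \<in> A} \<in> sets (weights_measure M)"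
proof -
  have "{\<omega>. \<forall>z\<in>J. \<omega> z \<in> A} = prod_emb UNIV (\<lambda>_. M) J (Pi\<^sub>E J (\<lambda>_. A))"
    by (auto simp: prod_emb_def space_PiM Pi_iff)
  then show ?thesis
    unfolding weights_measure_def using assms by (auto intro: sets_PiM_I)
qed

lemma measure_weights_cylinder:
  assumes "finite J" and "A \<in> sets borel"
  shows "measure (weights_measure M) {\<omega>. \<forall>z\<in>J. \<omega> z \<in> A} = measure M A ^ card J"
proof -
  have product: "product_prob_space (\<lambda>_::vtx. M)"
    by (rule product_prob_spaceI) (rule prob_space_axioms)
  have "emeasure (weights_measure M) {\<omega>. \<forall>z\<in>J. \<omega> z \<in> A} = emeasure M A ^ card J"
    using product_prob_space.emeasure_PiM_Collect[OF product, of J UNIV "\<lambda>_. A"] assms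
    by (simp add: weights_measure_def space_PiM PiE_UNIV_domain)
  also have "\<dots> = ennreal (measure M A ^ card J)"
    by (simp add: emeasure_eq_measure ennreal_power)
  finally show ?thesis
    by (simp add: measure_def)
qed

lemma AE_weights_ge:
  assumes "measure M {..<a} = 0"
  shows "AE \<omega> in weights_measure M. \<forall>z. a \<le> \<omega> z"
  unfolding AE_all_countable
proof
  fix z :: vtx
  interpret W: prob_space "weights_measure M" by (rule prob_space_weights_measure)
  have "{\<omega> \<in> space (weights_measure M). \<not> a \<le> \<omega> z} = {\<omega>. \<forall>y\<in>{z}. \<omega> y \<in> {..<a}}"
    by (auto simp: space_weights_measure)
  moreover have "emeasure (weights_measure M) {\<omega>. \<forall>y\<in>{z}. \<omega> y \<in> {..<a}} = 0"
    using measure_weights_cylinder[of "{z}" "{..<a}"] assms W.emeasure_eq_measure by simp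
  ultimately show "AE \<omega> in weights_measure M. a \<le> \<omega> z"
    using weights_cylinder_sets[of "{z}" "{..<a}"] by (subst AE_iff_measurable) auto
qed

lemma sets_light_columns: "finite S \<Longrightarrow> light_columns s ys S \<in> sets (weights_measure M)"
  unfolding light_columns_eq_cylinder by (intro weights_cylinder_sets) auto

lemma sets_many_light_columns: "many_light_columns s K n \<in> sets (weights_measure M)"
  unfolding many_light_columns_eq_UN using finite_light_column_choices
  by (intro sets.finite_UN sets_light_columns)
    (auto simp: light_column_choices_def dest: finite_subset[OF _ finite_lessThan])

lemma measure_light_columns_le:
  assumes "measure M {..<s} \<le> r ^ 2" and "0 \<le> r" and "r \<le> 1"
    and "S \<subseteq> {..<n}" and "n \<le> 2 * card S"
  shows "measure (weights_measure M) (light_columns s ys S) \<le> r ^ n"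
proof -
  have "finite S" using assms(4) by (rule finite_subset) simp
  moreover have "card ((\<lambda>i. (int i, ys ! i)) ` S) = card S"
    by (rule card_image) (auto simp: inj_on_def)
  ultimately have "measure (weights_measure M) (light_columns s ys S) = measure M {..<s} ^ card S"
    unfolding light_columns_eq_cylinder by (subst measure_weights_cylinder) auto
  also have "\<dots> \<le> (r ^ 2) ^ card S" by (intro power_mono assms(1)) simp
  also have "\<dots> = r ^ (2 * card S)" by (simp add: power_mult)
  also have "\<dots> \<le> r ^ n" using assms by (intro power_decreasing) auto
  finally show ?thesis .
qed

lemma measure_many_light_columns_le:
  assumes "measure M {..<s} \<le> r ^ 2" and "0 \<le> r" and "r \<le> 1"
  shows "measure (weights_measure M) (many_light_columns s K n) \<le> 2 ^ K * (6 * r) ^ n"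
proof -
  let ?C = "light_column_choices K n" and ?W = "weights_measure M"
  have choice: "snd p \<subseteq> {..<n}" "n \<le> 2 * card (snd p)" if "p \<in> ?C" for p
    using that by (auto simp: light_column_choices_def)
  have "measure ?W (many_light_columns s K n) \<le> (\<Sum>p\<in>?C. measure ?W (light_columns s (fst p) (snd p)))"
    unfolding many_light_columns_eq_UN
    by (intro measure_UNION_le finite_light_column_choices sets_light_columns)
      (meson choice(1) finite_lessThan finite_subset)
  also have "\<dots> \<le> (\<Sum>p\<in>?C. r ^ n)"
    by (intro sum_mono measure_light_columns_le[OF assms] choice)
  also have "\<dots> = real (card ?C) * r ^ n" by simp
  also have "\<dots> \<le> (3 ^ n * 2 ^ K * 2 ^ n) * r ^ n"
  proof (rule mult_right_mono)
    show "real (card ?C) \<le> 3 ^ n * 2 ^ K * 2 ^ n"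
      using of_nat_mono[OF card_light_column_choices[of K n], where 'a = real] by simp
  qed (simp add: assms(2))
  also have "\<dots> = 2 ^ K * (6 * r) ^ n"
  proof -
    have "(6::real) ^ n = 3 ^ n * 2 ^ n" by (simp flip: power_mult_distrib)
    then show ?thesis by (simp add: power_mult_distrib)
  qed
  finally show ?thesis .
qed

lemma AE_eventually_not_many_light_columns:
  fixes c s :: real
  assumes "0 \<le> c" and "measure M {..<s} \<le> (1 / (12 * 2 powr c)) ^ 2"
  shows "AE \<omega> in weights_measure M.
    eventually (\<lambda>n. \<omega> \<notin> many_light_columns s (nat \<lfloor>c * n\<rfloor>) n) sequentially"
proof -
  interpret W: prob_space "weights_measure M" by (rule prob_space_weights_measure)
  define r where "r = 1 / (12 * 2 powr c)"
  \<comment> \<open>so that the union bound \<open>2^K (6 r)^n \<le> (2 powr c * 6 r)^n\<close> is \<open>2^-n\<close>\<close>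
  have "1 \<le> 2 powr c" using assms(1) by (intro ge_one_powr_ge_zero) auto
  then have r: "0 \<le> r" "r \<le> 1" by (auto simp: r_def)
  have light: "measure M {..<s} \<le> r ^ 2" using assms(2) by (simp add: r_def)
  have bound: "measure (weights_measure M) (many_light_columns s (nat \<lfloor>c * n\<rfloor>) n) \<le> (1 / 2) ^ n" for n
  proof -
    have "(2::real) ^ nat \<lfloor>c * n\<rfloor> = 2 powr (nat \<lfloor>c * n\<rfloor>)" by (simp add: powr_realpow)
    also have "\<dots> \<le> 2 powr (c * n)" using assms(1) by (intro powr_mono) auto
    also have "\<dots> = (2 powr c) powr n" by (simp add: powr_powr)
    also have "\<dots> = (2 powr c) ^ n" by (simp add: powr_realpow)
    finally have "(2::real) ^ nat \<lfloor>c * n\<rfloor> * (6 * r) ^ n \<le> (2 powr c) ^ n * (6 * r) ^ n"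
      by (rule mult_right_mono) (simp add: r)
    also have "\<dots> = (2 powr c * (6 * r)) ^ n" by (simp add: power_mult_distrib)
    also have "2 powr c * (6 * r) = 1 / 2" by (simp add: r_def)
    finally show ?thesis
      using measure_many_light_columns_le[OF light r, of "nat \<lfloor>c * n\<rfloor>" n] by linarith
  qed
  have "summable (\<lambda>n. (1 / 2 :: real) ^ n)" by (rule summable_geometric) simp
  then have "summable (\<lambda>n. measure (weights_measure M) (many_light_columns s (nat \<lfloor>c * n\<rfloor>) n))"
    by (rule summable_comparison_test') (simp add: bound)
  from borel_cantelli_AE1[OF sets_many_light_columns _ this] show ?thesis
    by (simp add: space_weights_measure W.emeasure_eq_measure)
qed

end

lemma eventually_many_light_columns:
  fixes \<omega> :: "vtx \<Rightarrow> real" and t \<delta> v L :: real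
  assumes nonneg: "\<forall>z. 0 \<le> \<omega> z" and ge: "\<forall>z. t \<le> \<omega> z" and \<delta>: "0 < \<delta>" "\<delta> \<le> 1"
    and lim: "(\<lambda>n. T \<omega> (0, 0) (int n, \<lceil>v * real n\<rceil>) / real n) \<longlonglongrightarrow> L" and "L \<le> t + v"
  shows "eventually (\<lambda>n. \<omega> \<in> many_light_columns (t + \<delta>) (nat \<lfloor>(v + 1) * n\<rfloor>) n) sequentially"
proof -
  have "eventually (\<lambda>n. T \<omega> (0, 0) (int n, \<lceil>v * n\<rceil>) / n < t + v + \<delta> / 2) sequentially"
    using \<open>L \<le> t + v\<close> \<delta>(1) by (intro order_tendstoD(2)[OF lim]) simp
  then show ?thesis
    using eventually_gt_at_top[of 0]
  proof eventually_elim
    case (elim n)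
    then have T_less: "T \<omega> (0, 0) (int n, \<lceil>v * n\<rceil>) < (t + v + \<delta> / 2) * n"
      by (simp add: divide_less_eq)
    show ?case
      by (rule T_less_imp_many_light_columns[OF nonneg ge \<delta> _ T_less]) simp
  qed
qed

theorem proposition3p13:
  fixes G :: "real measure" and v L :: real
  assumes "prob_space G"
    and "sets G = sets borel"
    and "measure G {..<0} = 0"
    and "measure G {t0 G} = 0"
    and "v \<ge> 0"
    and "AE \<omega> in weights_measure G.
           (\<lambda>n. T \<omega> (0, 0) (int n, \<lceil>v * real n\<rceil>) / real n) \<longlonglongrightarrow> L"
  shows "L > t0 G + v"
proof (rule ccontr)
  assume "\<not> L > t0 G + v"
  interpret G: real_distribution G
    using assms(1,2) by (simp add: real_distribution_def real_distribution_axioms_def)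
  define r where "r = 1 / (12 * 2 powr (v + 1))"
  obtain \<delta> where \<delta>: "0 < \<delta>" "\<delta> \<le> 1" "measure G {..<t0 G + \<delta>} \<le> r ^ 2"
    using G.exists_light_threshold[OF assms(3,4), of "r ^ 2"] by (auto simp: r_def)
  have "AE \<omega> in weights_measure G.
      eventually (\<lambda>n. \<omega> \<notin> many_light_columns (t0 G + \<delta>) (nat \<lfloor>(v + 1) * n\<rfloor>) n) sequentially"
    using G.AE_eventually_not_many_light_columns[of "v + 1"] \<delta>(3) assms(5) by (simp add: r_def)
  moreover have "AE \<omega> in weights_measure G. \<forall>z. 0 \<le> \<omega> z"
    by (rule G.AE_weights_ge[OF assms(3)])
  moreover have "AE \<omega> in weights_measure G. \<forall>z. t0 G \<le> \<omega> z"
    by (rule G.AE_weights_ge[OF G.measure_lessThan_t0_eq_0[OF assms(3,4)]])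
  moreover note assms(6)
  ultimately have "AE \<omega> in weights_measure G. False"
  proof eventually_elim
    case (elim \<omega>)
    then have "eventually (\<lambda>n. \<omega> \<in> many_light_columns (t0 G + \<delta>) (nat \<lfloor>(v + 1) * n\<rfloor>) n) sequentially"
      using \<delta>(1,2) \<open>\<not> L > t0 G + v\<close> by (intro eventually_many_light_columns) auto
    with elim(1) have "eventually (\<lambda>n. False) sequentially" by eventually_elim simp
    then show False by simp
  qed
  then show False by (simp add: prob_space.AE_False[OF G.prob_space_weights_measure])
qed

end
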